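(* Assume $h_0=0$. Then the unique minimizer $\pi^*$ of $\pi\mapsto\max_{(\mu,\sigma)\in D}F(\pi,\mu,\sigma)$ is $$\pi^*=\begin{cases}\dfrac{h_1\sigma_-}{\sigma_-^2+\mu_+^2},&\text{if } \sigma_+\sigma_--2\mu_+^2\le\sigma_-^2,\\[2mm] \dfrac{h_1}{\sigma_M},&\text{if } \sigma_-^2<\sigma_+\sigma_--2\mu_+^2.\end{cases}$$ Moreover, the minimum of $\psi$ over $D$ is attained on the side $\{x=\mu_+\}$ of $D$.
   Context: Let $0<\mu_-<\mu_+$ and $0<\sigma_-<\sigma_+$ be real numbers, $D=[\mu_-,\mu_+]\times[\sigma_-,\sigma_+]$, and $h_0,h_1\in\mathbb R$. For $\pi\in\mathbb R$ and $(\mu,\sigma)\in D$ put $F(\pi,\mu,\sigma)=(h_0-\pi\mu)^2+(h_1-\pi\sigma)^2$. Write $\mu_M=(\mu_++\mu_-)/2$ and $\sigma_M=(\sigma_++\sigma_-)/2$. For $(x,y)\in D$ let $$\psi(x,y)=\frac{(h_0x+h_1y)^2}{2\mu_Mx+2\sigma_My-\mu_-\mu_+-\sigma_-\sigma_+}.$$ *)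

theory Defs
  imports Complex_Main
begin

definition F :: "real \<Rightarrow> real \<Rightarrow> real \<Rightarrow> real \<Rightarrow> real \<Rightarrow> real" where
  "F h0 h1 \<pi> \<mu> \<sigma> = (h0 - \<pi> * \<mu>)^2 + (h1 - \<pi> * \<sigma>)^2"

text \<open>The worst case value: maximum of F over D = [mu_-,mu_+] x [sigma_-,sigma_+]
  (D is compact and F continuous, so the supremum is a maximum).\<close>
definition maxF :: "real \<Rightarrow> real \<Rightarrow> real \<Rightarrow> real \<Rightarrow> real \<Rightarrow> real \<Rightarrow> real \<Rightarrow> real" where
  "maxF h0 h1 \<mu>m \<mu>p \<sigma>m \<sigma>p \<pi> =
     (SUP p \<in> {\<mu>m..\<mu>p} \<times> {\<sigma>m..\<sigma>p}. F h0 h1 \<pi> (fst p) (snd p))"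

definition psi :: "real \<Rightarrow> real \<Rightarrow> real \<Rightarrow> real \<Rightarrow> real \<Rightarrow> real \<Rightarrow> real \<Rightarrow> real \<Rightarrow> real" where
  "psi h0 h1 \<mu>m \<mu>p \<sigma>m \<sigma>p x y =
     (h0 * x + h1 * y)^2 /
     (2 * ((\<mu>p + \<mu>m) / 2) * x + 2 * ((\<sigma>p + \<sigma>m) / 2) * y - \<mu>m * \<mu>p - \<sigma>m * \<sigma>p)"

end

theory Submission
  imports Defs
begin

(* With h0 = 0 the objective F(pi,mu,sigma) = (pi mu)^2 + (h1 - pi sigma)^2 is increasing in
   mu on [mu_-,mu_+] and convex in sigma, so its maximum over D is attained at one of the two
   corners (mu_+, sigma_-), (mu_+, sigma_+): the worst case is the pointwise maximum of two
   quadratics in pi.  Expanding each quadratic around the candidate pi* shows that pi* is a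
   strict minimiser with quadratic growth, via a first-order criterion for the maximum of two
   quadratics: either pi* is the vertex of the dominant quadratic, or both quadratics agree at
   pi* and their slopes there have opposite signs.  The two regimes of the theorem are exactly
   these two situations.  For the second claim, psi with h0 = 0 has numerator (h1 y)^2
   independent of x and a positive denominator increasing in x, so psi decreases in x and its
   minimum over D is the minimum of the continuous function psi(mu_+, .) on [sigma_-,sigma_+]. *)

lemma square_between_le_max:
  fixes u v w :: real
  assumes "(w - u) * (w - v) \<le> 0"
  shows "w^2 \<le> max (u^2) (v^2)"
proof -
  have "(u \<le> w \<and> w \<le> v) \<or> (v \<le> w \<and> w \<le> u)"
    using assms unfolding mult_le_0_iff by auto
  hence "\<bar>w\<bar> \<le> \<bar>u\<bar> \<or> \<bar>w\<bar> \<le> \<bar>v\<bar>" by linarith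
  hence "w^2 \<le> u^2 \<or> w^2 \<le> v^2" by (metis abs_le_square_iff)
  thus ?thesis by linarith
qed

lemma maxF_at_corners:
  fixes h1 \<mu>m \<mu>p \<sigma>m \<sigma>p \<pi> :: real
  assumes "0 \<le> \<mu>m" "\<mu>m \<le> \<mu>p" "\<sigma>m \<le> \<sigma>p"
  shows "maxF 0 h1 \<mu>m \<mu>p \<sigma>m \<sigma>p \<pi> = max (F 0 h1 \<pi> \<mu>p \<sigma>m) (F 0 h1 \<pi> \<mu>p \<sigma>p)"
  unfolding maxF_def
proof (rule cSup_eq_maximum)
  let ?D = "{\<mu>m..\<mu>p} \<times> {\<sigma>m..\<sigma>p}"
  let ?f = "\<lambda>p. F 0 h1 \<pi> (fst p) (snd p)"
  have corners: "(\<mu>p, \<sigma>m) \<in> ?D" "(\<mu>p, \<sigma>p) \<in> ?D" using assms by auto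
  show "max (F 0 h1 \<pi> \<mu>p \<sigma>m) (F 0 h1 \<pi> \<mu>p \<sigma>p) \<in> ?f ` ?D"
    using image_eqI[OF _ corners(1), of _ ?f] image_eqI[OF _ corners(2), of _ ?f]
    unfolding max_def by auto
  fix z assume "z \<in> ?f ` ?D"
  then obtain \<mu> \<sigma> where m: "\<mu>m \<le> \<mu>" "\<mu> \<le> \<mu>p" "\<sigma>m \<le> \<sigma>" "\<sigma> \<le> \<sigma>p"
    and z: "z = F 0 h1 \<pi> \<mu> \<sigma>" by auto
  have "\<mu>^2 \<le> \<mu>p^2" using m assms by (intro power_mono) auto
  hence mu_part: "(\<pi>*\<mu>)^2 \<le> (\<pi>*\<mu>p)^2"
    unfolding power_mult_distrib by (rule mult_left_mono) simp
  have "(h1-\<pi>*\<sigma> - (h1-\<pi>*\<sigma>m)) * (h1-\<pi>*\<sigma> - (h1-\<pi>*\<sigma>p)) = \<pi>^2 * ((\<sigma>-\<sigma>m)*(\<sigma>-\<sigma>p))"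
    by (simp add: power2_eq_square algebra_simps)
  also have "\<dots> \<le> 0"
  proof -
    have "(\<sigma>-\<sigma>m)*(\<sigma>-\<sigma>p) \<le> 0" using m by (simp add: mult_nonneg_nonpos)
    thus ?thesis by (simp add: mult_nonneg_nonpos)
  qed
  finally have sigma_part: "(h1-\<pi>*\<sigma>)^2 \<le> max ((h1-\<pi>*\<sigma>m)^2) ((h1-\<pi>*\<sigma>p)^2)"
    by (rule square_between_le_max)
  show "z \<le> max (F 0 h1 \<pi> \<mu>p \<sigma>m) (F 0 h1 \<pi> \<mu>p \<sigma>p)"
    using mu_part sigma_part unfolding z F_def max_add_distrib_right[symmetric] by simp
qed

lemma F_expansion:
  fixes h \<pi> t \<mu> s :: real
  shows "F 0 h \<pi> \<mu> s = F 0 h t \<mu> s + (\<mu>^2 + s^2) * (\<pi> - t)^2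
                          + 2 * (\<pi> - t) * ((\<mu>^2 + s^2) * t - h * s)"
  unfolding F_def by (simp add: power2_eq_square algebra_simps)

lemma max_of_quadratics_growth:
  fixes f g :: "real \<Rightarrow> real" and t k1 k2 d1 d2 \<pi> :: real
  assumes f: "\<And>\<pi>. f \<pi> = f t + k1 * (\<pi> - t)^2 + 2 * (\<pi> - t) * d1"
    and g: "\<And>\<pi>. g \<pi> = g t + k2 * (\<pi> - t)^2 + 2 * (\<pi> - t) * d2"
    and curv: "k1 \<le> k2"
    and opt: "(d1 = 0 \<and> g t \<le> f t) \<or> (f t = g t \<and> d1 * d2 \<le> 0)"
  shows "max (f t) (g t) + k1 * (\<pi> - t)^2 \<le> max (f \<pi>) (g \<pi>)"
  using opt
proof
  assume "d1 = 0 \<and> g t \<le> f t"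
  thus ?thesis using f[of \<pi>] by simp
next
  assume cross: "f t = g t \<and> d1 * d2 \<le> 0"
  have "((\<pi> - t) * d1) * ((\<pi> - t) * d2) = (\<pi> - t)^2 * (d1 * d2)"
    by (simp add: power2_eq_square algebra_simps)
  also have "\<dots> \<le> 0" using cross by (simp add: mult_nonneg_nonpos)
  finally have "0 \<le> (\<pi> - t) * d1 \<or> 0 \<le> (\<pi> - t) * d2"
    by (metis linorder_not_le mult_neg_neg)
  moreover have "k1 * (\<pi> - t)^2 \<le> k2 * (\<pi> - t)^2" using curv by (simp add: mult_right_mono)
  ultimately show ?thesis using f[of \<pi>] g[of \<pi>] cross by linarith
qed

lemma vertex_regime:
  fixes h1 \<mu>p \<sigma>m \<sigma>p :: real
  assumes "0 < \<sigma>m" "\<sigma>m \<le> \<sigma>p" and regime: "\<sigma>p * \<sigma>m - 2 * \<mu>p^2 \<le> \<sigma>m^2"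
  defines "t \<equiv> h1 * \<sigma>m / (\<sigma>m^2 + \<mu>p^2)"
  shows "(\<mu>p^2 + \<sigma>m^2) * t - h1 * \<sigma>m = 0 \<and> F 0 h1 t \<mu>p \<sigma>p \<le> F 0 h1 t \<mu>p \<sigma>m"
proof
  define k where "k = \<mu>p^2 + \<sigma>m^2"
  have k_pos: "0 < k" unfolding k_def using assms(1) by (simp add: add_nonneg_pos)
  have t: "t = h1 * \<sigma>m / k" unfolding t_def k_def by (simp add: add.commute)
  show "(\<mu>p^2 + \<sigma>m^2) * t - h1 * \<sigma>m = 0" using k_pos unfolding t k_def by simp
  have difference: "F 0 h1 t \<mu>p \<sigma>m - F 0 h1 t \<mu>p \<sigma>p
                    = (\<sigma>p - \<sigma>m) * (t * (2*h1 - t*(\<sigma>p + \<sigma>m)))"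
    unfolding F_def by (simp add: power2_eq_square algebra_simps)
  have at_vertex: "t * (2*h1 - t*(\<sigma>p + \<sigma>m)) = h1^2 * \<sigma>m * (2*k - \<sigma>m*(\<sigma>p + \<sigma>m)) / k^2"
    unfolding t using k_pos by (simp add: field_simps power2_eq_square)
  have "0 \<le> 2*k - \<sigma>m*(\<sigma>p + \<sigma>m)"
    using regime unfolding k_def by (simp add: power2_eq_square algebra_simps)
  hence "0 \<le> (\<sigma>p - \<sigma>m) * (h1^2 * \<sigma>m * (2*k - \<sigma>m*(\<sigma>p + \<sigma>m)) / k^2)"
    using assms(1,2) by simp
  thus "F 0 h1 t \<mu>p \<sigma>p \<le> F 0 h1 t \<mu>p \<sigma>m" using difference at_vertex by simp
qed

lemma crossing_regime:
  fixes h1 \<mu>p \<sigma>m \<sigma>p :: real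
  assumes "0 < \<sigma>m" "\<sigma>m \<le> \<sigma>p" and regime: "\<sigma>m^2 < \<sigma>p * \<sigma>m - 2 * \<mu>p^2"
  defines "t \<equiv> h1 / ((\<sigma>p + \<sigma>m) / 2)"
  shows "F 0 h1 t \<mu>p \<sigma>m = F 0 h1 t \<mu>p \<sigma>p
       \<and> ((\<mu>p^2 + \<sigma>m^2) * t - h1 * \<sigma>m) * ((\<mu>p^2 + \<sigma>p^2) * t - h1 * \<sigma>p) \<le> 0"
proof
  define sM where "sM = (\<sigma>p + \<sigma>m) / 2"
  have sM_pos: "0 < sM" unfolding sM_def using assms(1,2) by simp
  have t: "t = h1 / sM" unfolding t_def sM_def ..
  have "h1 - t*\<sigma>m = -(h1 - t*\<sigma>p)" unfolding t sM_def using assms(1,2) by (simp add: field_simps)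
  thus "F 0 h1 t \<mu>p \<sigma>m = F 0 h1 t \<mu>p \<sigma>p" unfolding F_def by (metis power2_minus)
  have "((\<mu>p^2 + \<sigma>m^2) * t - h1 * \<sigma>m) * ((\<mu>p^2 + \<sigma>p^2) * t - h1 * \<sigma>p)
        = (h1 / sM)^2 * ((\<mu>p^2 + \<sigma>m^2 - \<sigma>m * sM) * (\<mu>p^2 + \<sigma>p^2 - \<sigma>p * sM))"
    unfolding t using sM_pos by (simp add: power2_eq_square field_simps)
  also have "\<dots> \<le> 0"
  proof -
    have "\<mu>p^2 + \<sigma>m^2 - \<sigma>m * sM \<le> 0"
      using regime unfolding sM_def by (simp add: power2_eq_square algebra_simps)
    moreover have "0 \<le> \<mu>p^2 + \<sigma>p^2 - \<sigma>p * sM"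
    proof -
      have "\<mu>p^2 + \<sigma>p^2 - \<sigma>p * sM = \<mu>p^2 + \<sigma>p * (\<sigma>p - \<sigma>m) / 2"
        unfolding sM_def by (simp add: power2_eq_square field_simps)
      moreover have "0 \<le> \<mu>p^2 + \<sigma>p * (\<sigma>p - \<sigma>m) / 2" using assms(1,2) by simp
      ultimately show ?thesis by linarith
    qed
    ultimately show ?thesis by (simp add: mult_nonneg_nonpos mult_nonpos_nonneg)
  qed
  finally show "((\<mu>p^2 + \<sigma>m^2) * t - h1 * \<sigma>m) * ((\<mu>p^2 + \<sigma>p^2) * t - h1 * \<sigma>p) \<le> 0" .
qed

lemma corner_max_growth:
  fixes h1 \<mu>p \<sigma>m \<sigma>p \<pi> :: real
  assumes "0 < \<sigma>m" "\<sigma>m \<le> \<sigma>p"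
  defines "\<pi>s \<equiv> (if \<sigma>p * \<sigma>m - 2 * \<mu>p^2 \<le> \<sigma>m^2
                  then h1 * \<sigma>m / (\<sigma>m^2 + \<mu>p^2)
                  else h1 / ((\<sigma>p + \<sigma>m) / 2))"
  shows "max (F 0 h1 \<pi>s \<mu>p \<sigma>m) (F 0 h1 \<pi>s \<mu>p \<sigma>p) + (\<mu>p^2 + \<sigma>m^2) * (\<pi> - \<pi>s)^2
         \<le> max (F 0 h1 \<pi> \<mu>p \<sigma>m) (F 0 h1 \<pi> \<mu>p \<sigma>p)"
proof (rule max_of_quadratics_growth[OF F_expansion F_expansion])
  show "\<mu>p^2 + \<sigma>m^2 \<le> \<mu>p^2 + \<sigma>p^2" using assms(1,2) by (simp add: power_mono)
  show "((\<mu>p^2 + \<sigma>m^2) * \<pi>s - h1 * \<sigma>m = 0 \<and> F 0 h1 \<pi>s \<mu>p \<sigma>p \<le> F 0 h1 \<pi>s \<mu>p \<sigma>m)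
      \<or> (F 0 h1 \<pi>s \<mu>p \<sigma>m = F 0 h1 \<pi>s \<mu>p \<sigma>p
         \<and> ((\<mu>p^2 + \<sigma>m^2) * \<pi>s - h1 * \<sigma>m) * ((\<mu>p^2 + \<sigma>p^2) * \<pi>s - h1 * \<sigma>p) \<le> 0)"
    using vertex_regime[OF assms(1,2)] crossing_regime[OF assms(1,2)]
    unfolding \<pi>s_def by (cases "\<sigma>p * \<sigma>m - 2 * \<mu>p^2 \<le> \<sigma>m^2") auto
qed

text \<open>The denominator of psi is positive on D: it equals
  mu_-^2 + sigma_-^2 plus nonnegative increments in x and y.\<close>
lemma psi_denominator_pos:
  fixes \<mu>m \<mu>p \<sigma>m \<sigma>p x y :: real
  assumes "0 < \<mu>m" "\<mu>m \<le> \<mu>p" "0 < \<sigma>m" "\<sigma>m \<le> \<sigma>p" "\<mu>m \<le> x" "\<sigma>m \<le> y"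
  shows "0 < (\<mu>p + \<mu>m) * x + (\<sigma>p + \<sigma>m) * y - \<mu>m * \<mu>p - \<sigma>m * \<sigma>p"
proof -
  have "(\<mu>p + \<mu>m) * x + (\<sigma>p + \<sigma>m) * y - \<mu>m * \<mu>p - \<sigma>m * \<sigma>p
        = \<mu>m^2 + \<sigma>m^2 + (\<mu>p + \<mu>m) * (x - \<mu>m) + (\<sigma>p + \<sigma>m) * (y - \<sigma>m)"
    by (simp add: power2_eq_square algebra_simps)
  moreover have "0 < \<mu>m^2 + \<sigma>m^2" using assms(1) by (simp add: add_pos_nonneg)
  moreover have "0 \<le> (\<mu>p + \<mu>m) * (x - \<mu>m)" "0 \<le> (\<sigma>p + \<sigma>m) * (y - \<sigma>m)" using assms by simp_all
  ultimately show ?thesis by linarith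
qed

lemma psi_h0_zero:
  "psi 0 h1 \<mu>m \<mu>p \<sigma>m \<sigma>p x y
   = (h1 * y)^2 / ((\<mu>p + \<mu>m) * x + (\<sigma>p + \<sigma>m) * y - \<mu>m * \<mu>p - \<sigma>m * \<sigma>p)"
proof -
  have half: "2 * (a / 2) = a" for a :: real by simp
  show ?thesis unfolding psi_def half by simp
qed

lemma psi_le_on_right_side:
  fixes h1 \<mu>m \<mu>p \<sigma>m \<sigma>p x y :: real
  assumes "0 < \<mu>m" "\<mu>m \<le> \<mu>p" "0 < \<sigma>m" "\<sigma>m \<le> \<sigma>p" "x \<in> {\<mu>m..\<mu>p}" "\<sigma>m \<le> y"
  shows "psi 0 h1 \<mu>m \<mu>p \<sigma>m \<sigma>p \<mu>p y \<le> psi 0 h1 \<mu>m \<mu>p \<sigma>m \<sigma>p x y"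
  unfolding psi_h0_zero
proof (rule divide_left_mono)
  show "(\<mu>p + \<mu>m) * x + (\<sigma>p + \<sigma>m) * y - \<mu>m * \<mu>p - \<sigma>m * \<sigma>p
        \<le> (\<mu>p + \<mu>m) * \<mu>p + (\<sigma>p + \<sigma>m) * y - \<mu>m * \<mu>p - \<sigma>m * \<sigma>p"
    using assms by (simp add: mult_left_mono)
  show "0 < ((\<mu>p + \<mu>m) * \<mu>p + (\<sigma>p + \<sigma>m) * y - \<mu>m * \<mu>p - \<sigma>m * \<sigma>p)
          * ((\<mu>p + \<mu>m) * x + (\<sigma>p + \<sigma>m) * y - \<mu>m * \<mu>p - \<sigma>m * \<sigma>p)"
    using assms psi_denominator_pos[OF assms(1-4)] by (intro mult_pos_pos) auto
qed simp

lemma psi_min_on_right_side: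
  fixes h1 \<mu>m \<mu>p \<sigma>m \<sigma>p :: real
  assumes "0 < \<mu>m" "\<mu>m \<le> \<mu>p" "0 < \<sigma>m" "\<sigma>m \<le> \<sigma>p"
  shows "\<exists>y\<in>{\<sigma>m..\<sigma>p}. \<forall>x'\<in>{\<mu>m..\<mu>p}. \<forall>y'\<in>{\<sigma>m..\<sigma>p}.
           psi 0 h1 \<mu>m \<mu>p \<sigma>m \<sigma>p \<mu>p y \<le> psi 0 h1 \<mu>m \<mu>p \<sigma>m \<sigma>p x' y'"
proof -
  let ?side = "psi 0 h1 \<mu>m \<mu>p \<sigma>m \<sigma>p \<mu>p"
  have "\<forall>y\<in>{\<sigma>m..\<sigma>p}. (\<mu>p + \<mu>m) * \<mu>p + (\<sigma>p + \<sigma>m) * y - \<mu>m * \<mu>p - \<sigma>m * \<sigma>p \<noteq> 0"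
    using psi_denominator_pos[OF assms] assms(2) by (metis atLeastAtMost_iff less_irrefl order_refl)
  hence "continuous_on {\<sigma>m..\<sigma>p} ?side"
    unfolding psi_h0_zero by (intro continuous_intros) auto
  moreover have "{\<sigma>m..\<sigma>p} \<noteq> {}" using assms(4) by simp
  ultimately obtain y where y: "y \<in> {\<sigma>m..\<sigma>p}" and min: "\<forall>y'\<in>{\<sigma>m..\<sigma>p}. ?side y \<le> ?side y'"
    using continuous_attains_inf[OF compact_Icc] by blast
  show ?thesis
  proof (intro bexI[OF _ y] ballI)
    fix x' y' assume "x' \<in> {\<mu>m..\<mu>p}" "y' \<in> {\<sigma>m..\<sigma>p}"
    hence "?side y' \<le> psi 0 h1 \<mu>m \<mu>p \<sigma>m \<sigma>p x' y'"
      using psi_le_on_right_side[OF assms] by simp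
    thus "?side y \<le> psi 0 h1 \<mu>m \<mu>p \<sigma>m \<sigma>p x' y'" using min \<open>y' \<in> {\<sigma>m..\<sigma>p}\<close> by fastforce
  qed
qed

theorem mainTheorem9:
  fixes h0 h1 \<mu>m \<mu>p \<sigma>m \<sigma>p :: real
  assumes "0 < \<mu>m" "\<mu>m < \<mu>p" "0 < \<sigma>m" "\<sigma>m < \<sigma>p"
    and "h0 = 0"
  defines "\<pi>s \<equiv> (if \<sigma>p * \<sigma>m - 2 * \<mu>p^2 \<le> \<sigma>m^2
                  then h1 * \<sigma>m / (\<sigma>m^2 + \<mu>p^2)
                  else h1 / ((\<sigma>p + \<sigma>m) / 2))"
  shows "(\<forall>\<pi>. maxF h0 h1 \<mu>m \<mu>p \<sigma>m \<sigma>p \<pi>s \<le> maxF h0 h1 \<mu>m \<mu>p \<sigma>m \<sigma>p \<pi>)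
       \<and> (\<forall>\<pi>. maxF h0 h1 \<mu>m \<mu>p \<sigma>m \<sigma>p \<pi> \<le> maxF h0 h1 \<mu>m \<mu>p \<sigma>m \<sigma>p \<pi>s \<longrightarrow> \<pi> = \<pi>s)
       \<and> (\<exists>y\<in>{\<sigma>m..\<sigma>p}. \<forall>x'\<in>{\<mu>m..\<mu>p}. \<forall>y'\<in>{\<sigma>m..\<sigma>p}.
              psi h0 h1 \<mu>m \<mu>p \<sigma>m \<sigma>p \<mu>p y \<le> psi h0 h1 \<mu>m \<mu>p \<sigma>m \<sigma>p x' y')"
proof -
  have order: "0 \<le> \<mu>m" "\<mu>m \<le> \<mu>p" "\<sigma>m \<le> \<sigma>p" using assms(1-4) by simp_all
  have growth: "maxF h0 h1 \<mu>m \<mu>p \<sigma>m \<sigma>p \<pi>s + (\<mu>p^2 + \<sigma>m^2) * (\<pi> - \<pi>s)^2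
                \<le> maxF h0 h1 \<mu>m \<mu>p \<sigma>m \<sigma>p \<pi>" for \<pi>
    using corner_max_growth[OF assms(3) order(3), of h1 \<mu>p \<pi>]
    unfolding assms(5) maxF_at_corners[OF order] \<pi>s_def .
  have curvature: "0 < \<mu>p^2 + \<sigma>m^2" using assms(3) by (simp add: add_nonneg_pos)
  have unique: "\<pi> = \<pi>s" if "maxF h0 h1 \<mu>m \<mu>p \<sigma>m \<sigma>p \<pi> \<le> maxF h0 h1 \<mu>m \<mu>p \<sigma>m \<sigma>p \<pi>s" for \<pi>
  proof -
    have "(\<mu>p^2 + \<sigma>m^2) * (\<pi> - \<pi>s)^2 \<le> 0" using growth[of \<pi>] that by linarith
    thus ?thesis using curvature by (simp add: mult_le_0_iff)
  qed
  have minimiser: "maxF h0 h1 \<mu>m \<mu>p \<sigma>m \<sigma>p \<pi>s \<le> maxF h0 h1 \<mu>m \<mu>p \<sigma>m \<sigma>p \<pi>" for \<pi>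
  proof -
    have "0 \<le> (\<mu>p^2 + \<sigma>m^2) * (\<pi> - \<pi>s)^2" using curvature by simp
    thus ?thesis using growth[of \<pi>] by linarith
  qed
  show ?thesis
    using minimiser unique psi_min_on_right_side[OF assms(1) order(2) assms(3) order(3)]
    unfolding assms(5) by blast
qed

end
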